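(* Consider the real linear measurement model $\bm{y}=\bm{A}\bm{x}+\bm{w}$ with $\bm{A}\in\mathbb{R}^{m\times n}$ having i.i.d. entries $\mathcal{N}(0,1/m)$, $\bm{x}\in\mathbb{R}^n$ having i.i.d. entries drawn from the least-favorable distribution $$p_x=\tfrac{\epsilon}{2}\Delta_{x=-\mu}+(1-\epsilon)\Delta_{x=0}+\tfrac{\epsilon}{2}\Delta_{x=\mu},\qquad \epsilon\in(0,1],$$ in the limit $\mu\to\infty$, and $\bm{w}$ additive white Gaussian noise with i.i.d. entries $\mathcal{N}(0,\sigma_w^2)$ where $\sigma_w^2=\delta\sigma_0^2$, $\delta=m/n$, and $\sigma_0^2>0$ is a constant. Apply the AMP algorithm with the soft-thresholding estimator and optimally tuned threshold (described in the context). Then, asymptotically ($m,n\to\infty$ with $m/n\to\delta$), the number of measurements that minimizes the MSE is $$\delta^{\dagger}=2M(\epsilon,\alpha^{\dagger}),$$ which is independent of the noise variance (i.e. of $\sigma_0^2$).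
   Context: AMP iterates $\bm{x}^{t+1}=\eta(\bm{A}^{T}\bm{r}^{t}+\bm{x}^{t})$, $\bm{r}^{t}=\bm{y}-\bm{A}\bm{x}^{t}+\frac{1}{\delta}\langle\eta'(\bm{A}^{T}\bm{r}^{t-1}+\bm{x}^{t-1})\rangle\bm{r}^{t-1}$ (with $\langle\bm v\rangle=\frac1n\sum_i v_i$, $\bm r^0=\bm y$, $\bm x^0=\bm 0$), where $\eta$ is componentwise soft thresholding $\eta(\beta,\lambda)=\mathrm{sign}(\beta)\max(|\beta|-\lambda,0)$ with threshold $\lambda^t=\alpha^{\dagger}\sigma_e^t$. Its asymptotic performance is described by state evolution: $(\sigma_e^{t+1})^2=\frac{1}{\delta}\mathrm{Err}_{t+1}+\sigma_w^2$, with $\mathrm{Err}_{t+1}=M(\epsilon,\alpha^\dagger)(\sigma_e^t)^2$ in the limit $\mu\to\infty$, where $$M(\epsilon,\alpha)=\epsilon(1+\alpha^2)+(1-\epsilon)\left[2(1+\alpha^2)\Phi(-\alpha)-2\alpha\phi(\alpha)\right],$$ $\phi$ and $\Phi$ are the standard Gaussian density and CDF, and $\alpha^{\dagger}=\arg\min_{\alpha\ge 0}M(\epsilon,\alpha)$. AMP is assumed to converge, i.e. the state evolution reaches a fixed point $\sigma_e^\infty$, and the MSE is $\mathrm{Err}=\lim_{n\to\infty}\frac1n\mathbb{E}\|\bm{x}-\hat{\bm x}\|^2$, given by the fixed-point value $\mathrm{Err}_\infty$ of the state evolution (considered as a function of $\delta$ over the range $\delta>M(\epsilon,\alpha^\dagger)$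 where it is positive). *)

theory Defs
  imports "HOL-Analysis.Analysis"
begin

definition std_phi :: "real \<Rightarrow> real" where
  "std_phi x = exp (- (x^2) / 2) / sqrt (2 * pi)"

definition std_Phi :: "real \<Rightarrow> real" where
  "std_Phi x = (LBINT t:{..x}. std_phi t)"

text \<open>Normalized MSE of soft thresholding at threshold alpha*sigma in the limit mu to infinity.\<close>
definition M_fun :: "real \<Rightarrow> real \<Rightarrow> real" where
  "M_fun eps a = eps * (1 + a^2)
     + (1 - eps) * (2 * (1 + a^2) * std_Phi (- a) - 2 * a * std_phi a)"

definition alpha_dag :: "real \<Rightarrow> real" where
  "alpha_dag eps = (SOME a. a \<ge> 0 \<and> (\<forall>b\<ge>0. M_fun eps a \<le> M_fun eps b))"

text \<open>State evolution map for the effective noise variance (sigma_e^t)^2, with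
  sigma_w^2 = delta * s0 (s0 = sigma_0^2) and Err_{t+1} = M(eps, alpha_dag) (sigma_e^t)^2.\<close>
definition SE_step :: "real \<Rightarrow> real \<Rightarrow> real \<Rightarrow> real \<Rightarrow> real" where
  "SE_step eps s0 delta v = (1 / delta) * (M_fun eps (alpha_dag eps) * v) + delta * s0"

definition Err_inf :: "real \<Rightarrow> real \<Rightarrow> real \<Rightarrow> real" where
  "Err_inf eps s0 delta =
     M_fun eps (alpha_dag eps) * (THE v. v > 0 \<and> SE_step eps s0 delta v = v)"

end

theory Submission
  imports Defs "HOL-Probability.Distributions" "HOL-Real_Asymp.Real_Asymp"
begin

text \<open>The state evolution is linear in the noise variance, so its positive fixed point is
  \<open>v = \<delta>\<^sup>2 \<sigma>\<^sub>0\<^sup>2 / (\<delta> - M)\<close> and \<open>Err\<^sub>\<infinity> = M \<sigma>\<^sub>0\<^sup>2 \<delta>\<^sup>2 / (\<delta> - M)\<close>,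
  which by \<open>\<delta>\<^sup>2 \<ge> 4 M (\<delta> - M)\<close> is minimal exactly at \<open>\<delta> = 2 M\<close>. All this needs \<open>M > 0\<close>:
  the Gaussian part of \<open>M\<close> is twice the nonnegative integral
  \<open>\<integral>\<^bsub>t \<le> -\<alpha>\<^esub> \<phi>(t) (t + \<alpha>)\<^sup>2 dt\<close>, and \<open>\<epsilon> (1 + \<alpha>\<^sup>2) > 0\<close>.\<close>

lemma std_phi_eq_std_normal_density: "std_phi x = std_normal_density x"
  by (simp add: std_phi_def std_normal_density_def)

lemma std_phi_minus [simp]: "std_phi (- x) = std_phi x"
  by (simp add: std_phi_def)

lemma std_phi_nonneg: "0 \<le> std_phi x"
  by (simp add: std_phi_def)

lemma has_real_derivative_std_phi: "(std_phi has_real_derivative (- x * std_phi x)) (at x)"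
  unfolding std_phi_def by (auto intro!: derivative_eq_intros simp: field_simps power2_eq_square)

lemma continuous_on_std_phi_mult_power: "continuous_on UNIV (\<lambda>t. std_phi t * t ^ k)"
  unfolding std_phi_def by (intro continuous_intros) auto

lemma set_integrable_std_phi_mult_power:
  assumes "S \<in> sets lborel"
  shows "set_integrable lborel S (\<lambda>t. std_phi t * t ^ k)"
proof -
  have "integrable lborel (\<lambda>t. std_phi t * t ^ k)"
    using integrable_std_normal_moment[of k] by (simp add: std_phi_eq_std_normal_density)
  then show ?thesis
    unfolding set_integrable_def using assms by (intro integrable_mult_indicator) auto
qed

lemma set_integral_lessThan_eq_atMost:
  "(LBINT t:{..<b}. f t) = (LBINT t:{..b::real}. (f t :: real))"
  by (rule set_integral_discrete_difference[where X = "{b}"]) auto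

lemma set_integral_atMost_FTC:
  fixes F f :: "real \<Rightarrow> real"
  assumes deriv: "\<And>x. (F has_real_derivative f x) (at x)"
    and "continuous_on UNIV f" and "set_integrable lborel {..<b} f"
    and lim: "(F \<longlongrightarrow> 0) at_bot"
  shows "(LBINT t:{..b}. f t) = F b"
proof -
  have "(LBINT x=-\<infinity>..ereal b. f x) = F b - 0"
  proof (rule interval_integral_FTC_integrable)
    show "((F \<circ> real_of_ereal) \<longlongrightarrow> 0) (at_right (-\<infinity>))"
      using lim by (simp add: ereal_tendsto_simps)
    show "((F \<circ> real_of_ereal) \<longlongrightarrow> F b) (at_left (ereal b))"
      unfolding ereal_tendsto_simps using deriv DERIV_isCont isCont_def
      by (metis tendsto_at_left_sequentially filterlim_at_split)
  qed (use assms in \<open>auto simp: has_real_derivative_iff_has_vector_derivative[symmetric]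
                         continuous_on_eq_continuous_at\<close>)
  then show ?thesis
    by (simp add: interval_lebesgue_integral_def set_integral_lessThan_eq_atMost)
qed

lemma set_integral_atMost_std_phi_mult_self:
  "(LBINT t:{..b}. std_phi t * t ^ 1) = - std_phi b"
proof (rule set_integral_atMost_FTC)
  show "((\<lambda>t. - std_phi t) has_real_derivative std_phi x * x ^ 1) (at x)" for x
    using has_real_derivative_std_phi[of x] by (auto intro!: derivative_eq_intros)
  show "((\<lambda>t. - std_phi t) \<longlongrightarrow> 0) at_bot"
    unfolding std_phi_def by real_asymp
qed (use set_integrable_std_phi_mult_power[of "{..<b}" 1]
         continuous_on_std_phi_mult_power[of 1] in auto)

lemma set_integral_atMost_std_phi_mult_square_minus_one:
  "(LBINT t:{..b}. std_phi t * t ^ 2 - std_phi t * t ^ 0) = - b * std_phi b"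
proof (rule set_integral_atMost_FTC)
  show "((\<lambda>t. - t * std_phi t) has_real_derivative std_phi x * x ^ 2 - std_phi x * x ^ 0) (at x)"
    for x using has_real_derivative_std_phi[of x]
    by (auto intro!: derivative_eq_intros simp: algebra_simps power2_eq_square)
  show "((\<lambda>t. - t * std_phi t) \<longlongrightarrow> 0) at_bot"
    unfolding std_phi_def by real_asymp
  show "continuous_on UNIV (\<lambda>t. std_phi t * t ^ 2 - std_phi t * t ^ 0)"
    using continuous_on_std_phi_mult_power[of 2] continuous_on_std_phi_mult_power[of 0]
    by (intro continuous_intros) auto
qed (use set_integrable_std_phi_mult_power[of "{..<b}" 2]
         set_integrable_std_phi_mult_power[of "{..<b}" 0] in auto)

lemma set_integral_atMost_std_phi_mult_square_dist:
  "(LBINT t:{..b}. std_phi t * (t - b)^2) = (1 + b^2) * std_Phi b + b * std_phi b"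
proof -
  let ?S = "{..b}"
  have i0: "set_integrable lborel ?S std_phi"
    using set_integrable_std_phi_mult_power[of ?S 0] by simp
  have i1: "set_integrable lborel ?S (\<lambda>t. (2*b) * (std_phi t * t))"
    using set_integrable_std_phi_mult_power[of ?S 1] by simp
  have i2: "set_integrable lborel ?S (\<lambda>t. std_phi t * t^2)"
    using set_integrable_std_phi_mult_power[of ?S 2] by simp
  have first: "(LBINT t:?S. std_phi t * t) = - std_phi b"
    using set_integral_atMost_std_phi_mult_self[of b] by simp
  have "(LBINT t:?S. std_phi t * t^2 - std_phi t) = - b * std_phi b"
    using set_integral_atMost_std_phi_mult_square_minus_one[of b] by simp
  then have second: "(LBINT t:?S. std_phi t * t^2) = std_Phi b - b * std_phi b"
    using set_integral_diff(2)[OF i2 i0] by (simp add: std_Phi_def)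
  have "(LBINT t:?S. std_phi t * (t - b)^2)
      = (LBINT t:?S. (std_phi t * t^2 - (2*b) * (std_phi t * t)) + b^2 * std_phi t)"
    by (rule set_lebesgue_integral_cong) (auto simp: algebra_simps power2_eq_square)
  also have "\<dots> = (LBINT t:?S. std_phi t * t^2) - (LBINT t:?S. (2*b) * (std_phi t * t))
                  + (LBINT t:?S. b^2 * std_phi t)"
    using set_integral_diff(2)[OF i2 i1] i0
    by (simp add: set_integral_add(2)[OF set_integral_diff(1)[OF i2 i1]])
  also have "\<dots> = (std_Phi b - b * std_phi b) - 2*b*(- std_phi b) + b^2 * std_Phi b"
    by (simp only: set_integral_mult_right first second std_Phi_def)
  finally show ?thesis by (simp add: algebra_simps)
qed

lemma std_Phi_moment_bound_nonneg: "0 \<le> (1 + b^2) * std_Phi b + b * std_phi b"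
proof -
  have "0 \<le> (LBINT t:{..b}. std_phi t * (t - b)^2)"
    unfolding set_lebesgue_integral_def
    by (rule Bochner_Integration.integral_nonneg) (auto simp: std_phi_nonneg indicator_def)
  then show ?thesis by (simp only: set_integral_atMost_std_phi_mult_square_dist)
qed

lemma M_fun_pos:
  assumes "0 < eps" "eps \<le> 1"
  shows "0 < M_fun eps a"
proof -
  have "0 \<le> 2 * (1 + a^2) * std_Phi (- a) - 2 * a * std_phi a"
    using std_Phi_moment_bound_nonneg[of "- a"] by (simp add: algebra_simps)
  with assms have "0 \<le> (1 - eps) * (2 * (1 + a^2) * std_Phi (- a) - 2 * a * std_phi a)"
    by simp
  moreover have "0 < eps * (1 + a^2)"
    using assms by (simp add: add_pos_nonneg)
  ultimately show ?thesis
    unfolding M_fun_def by linarith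
qed

lemma Err_inf_eq:
  assumes "0 \<le> M_fun eps (alpha_dag eps)" "M_fun eps (alpha_dag eps) < d" "0 < s0"
  shows "Err_inf eps s0 d = M_fun eps (alpha_dag eps) * s0 * (d^2 / (d - M_fun eps (alpha_dag eps)))"
proof -
  let ?M = "M_fun eps (alpha_dag eps)"
  have "0 < d" "0 < d - ?M"
    using assms by auto
  have "(THE v. v > 0 \<and> SE_step eps s0 d v = v) = d^2 * s0 / (d - ?M)"
  proof (rule the_equality)
    show "0 < d^2 * s0 / (d - ?M) \<and> SE_step eps s0 d (d^2 * s0 / (d - ?M)) = d^2 * s0 / (d - ?M)"
      using \<open>0 < d\<close> \<open>0 < d - ?M\<close> \<open>0 < s0\<close> by (auto simp: SE_step_def field_simps power2_eq_square)
  next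
    fix v assume "0 < v \<and> SE_step eps s0 d v = v"
    then have "v * (d - ?M) = d^2 * s0"
      using \<open>0 < d\<close> by (simp add: SE_step_def field_simps power2_eq_square)
    then show "v = d^2 * s0 / (d - ?M)"
      using \<open>0 < d - ?M\<close> by (simp add: field_simps)
  qed
  then show ?thesis
    by (simp add: Err_inf_def)
qed

lemma square_div_diff_strict_min:
  fixes M d :: real
  assumes "0 < M" "M < d" "d \<noteq> 2 * M"
  shows "(2 * M)^2 / (2 * M - M) < d^2 / (d - M)"
proof -
  have "0 < (d - 2 * M)^2"
    using assms by simp
  then have "4 * M * (d - M) < d^2"
    by (simp add: power2_eq_square algebra_simps)
  then show ?thesis
    using assms by (simp add: field_simps power2_eq_square)
qed

theorem theorem1:
  fixes eps s0 :: real
  assumes "0 < eps" and "eps \<le> 1" and "0 < s0"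
  shows "2 * M_fun eps (alpha_dag eps) > M_fun eps (alpha_dag eps) \<and>
         (\<forall>delta. delta > M_fun eps (alpha_dag eps) \<and> delta \<noteq> 2 * M_fun eps (alpha_dag eps)
            \<longrightarrow> Err_inf eps s0 (2 * M_fun eps (alpha_dag eps)) < Err_inf eps s0 delta)"
proof -
  let ?M = "M_fun eps (alpha_dag eps)"
  have M: "0 < ?M"
    using M_fun_pos assms by blast
  show ?thesis
  proof (intro conjI allI impI)
    show "?M < 2 * ?M"
      using M by simp
    fix d assume d: "?M < d \<and> d \<noteq> 2 * ?M"
    have "Err_inf eps s0 (2 * ?M) = ?M * s0 * ((2 * ?M)^2 / (2 * ?M - ?M))"
      using Err_inf_eq M \<open>0 < s0\<close> by simp
    also have "\<dots> < ?M * s0 * (d^2 / (d - ?M))"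
      using square_div_diff_strict_min[of ?M d] d M \<open>0 < s0\<close>
      by (intro mult_strict_left_mono) auto
    also have "\<dots> = Err_inf eps s0 d"
      using Err_inf_eq d M \<open>0 < s0\<close> by simp
    finally show "Err_inf eps s0 (2 * ?M) < Err_inf eps s0 d" .
  qed
qed

end
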